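(* The centroid (center of area) of the region bounded by $\Delta_u$ is $$C_2=\left(-\frac{a^2+b^2}{2a}\cos u,\,-\frac{a^2+b^2}{2b}\sin u\right),$$ which coincides with the average $\frac{1}{2\pi}\int_0^{2\pi}\Delta_u(t)\,dt$ and with the centroid of the cusp triangle $T'=P_1'P_2'P_3'$.
   Context: Let $a>b>0$ and $c>0$ with $c^2=a^2-b^2$. Let $\mathcal{E}$ be the ellipse $x^2/a^2+y^2/b^2=1$ with center $O=(0,0)$, parametrized by $P(t)=(a\cos t,b\sin t)$. Fix $u\in\mathbb{R}$ and let $M=M_u=(a\cos u,b\sin u)\in\mathcal{E}$. Let $\Delta_u(t)=(x_u(t),y_u(t))$, $t\in\mathbb{R}$, where $x_u(t)=\frac1a\big(c^2(1+\cos(t+u))\cos t-a^2\cos u\big)$ and $y_u(t)=\frac1b\big(c^2\cos t\sin(t+u)-c^2\sin t-a^2\sin u\big)$; this is the negative pedal curve of $\mathcal{E}$ with respect to $M$ (a simple closed curve). For $i=1,2,3$ let $t_i=-u/3-2\pi(i-1)/3$ and $P_i'=\Delta_u(t_i)$ (the three cusps of $\Delta_u$); $T'$ is the triangle $P_1'P_2'P_3'$. *)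

theory Defs
  imports "HOL-Analysis.Analysis"
begin

text \<open>The negative pedal curve Delta_u of the ellipse x^2/a^2+y^2/b^2=1 with
  respect to M_u = (a cos u, b sin u), where c^2 = a^2 - b^2.\<close>
definition neg_pedal :: "real \<Rightarrow> real \<Rightarrow> real \<Rightarrow> real \<Rightarrow> real \<Rightarrow> real \<times> real" where
  "neg_pedal a b c u t =
     ((c^2 * (1 + cos (t + u)) * cos t - a^2 * cos u) / a,
      (c^2 * cos t * sin (t + u) - c^2 * sin t - a^2 * sin u) / b)"

definition area_centroid :: "(real \<times> real) set \<Rightarrow> real \<times> real" where
  "area_centroid S = (1 / measure lebesgue S) *\<^sub>R integral S (\<lambda>z. z)"

definition triangle_centroid :: "real \<times> real \<Rightarrow> real \<times> real \<Rightarrow> real \<times> real \<Rightarrow> real \<times> real" where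
  "triangle_centroid p1 p2 p3 = (1/3) *\<^sub>R (p1 + p2 + p3)"

end

theory Submission
  imports Defs "HOL-Complex_Analysis.Complex_Analysis"
begin

text \<open>
  With alpha = c^2/a, beta = c^2/b and C the claimed centroid, the curve is
  Delta_u(t) = C + (alpha Re d(t), beta Im d(t)), an affine image of the deltoid
  d(t) = e^(-it) + e^(i(2t+u))/2. The deltoid has the threefold symmetry
  d(t - 2pi/3) = w d(t) with w = e^(2pi i/3). Hence the cusps are d, w d, w^2 d, which sum
  to zero, and the mean of d over a period vanishes.

  For the region, multiplication by w conjugated by the stretch is an affine map fixing C
  that maps the region onto itself. Its linear part L is unimodular, hence a product of
  shears and Lebesgue measure preserving, so the moment I and area A of the region satisfy
  I - A C = L (I - A C); as L has no nonzero fixed vector, I = A C. The region contains C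
  because d stays within distance 1/2 of the clockwise unit circle and so winds around 0.
\<close>

lemma bounded_continuous_image_UNIV:
  fixes h :: "'a::euclidean_space \<Rightarrow> 'b::metric_space"
  assumes "continuous_on UNIV h" "bounded T"
  shows "bounded (h ` T)"
proof -
  have "compact (h ` closure T)"
    using assms by (intro compact_continuous_image continuous_on_subset[OF assms(1)]) auto
  then show ?thesis
    by (meson bounded_subset closure_subset compact_imp_bounded image_mono)
qed

lemma inside_homeomorphism_image:
  fixes h :: "'a::euclidean_space \<Rightarrow> 'b::euclidean_space"
  assumes hk: "homeomorphism UNIV UNIV h k"
  shows "inside (h ` S) = h ` inside S"
proof -
  have kh: "k (h x) = x" "h (k y) = y" for x y
    using hk by (simp_all add: homeomorphism_apply1 homeomorphism_apply2)
  have cont: "continuous_on UNIV h" "continuous_on UNIV k"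
    using hk by (simp_all add: homeomorphism_def)
  have "bij h"
    by (rule o_bij[of k]) (simp_all add: fun_eq_iff kh)
  then have compl: "h ` (- S) = - (h ` S)"
    by (rule bij_image_Compl_eq)
  have hom: "homeomorphism (- S) (- (h ` S)) h k"
    using homeomorphism_of_subsets[OF hk _ _ compl] by simp
  have bounded_iff: "bounded (h ` T) \<longleftrightarrow> bounded T" for T
  proof
    assume "bounded (h ` T)"
    then have "bounded (k ` h ` T)" by (rule bounded_continuous_image_UNIV[OF cont(2)])
    then show "bounded T" by (simp add: image_image kh)
  qed (rule bounded_continuous_image_UNIV[OF cont(1)])
  have "h x \<in> inside (h ` S) \<longleftrightarrow> x \<in> inside S" for x
  proof (cases "x \<in> S")
    case False
    then show ?thesis
      using connected_component_set_homeomorphism[OF hom, of x] compl bounded_iff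
      by (auto simp: inside_def)
  next
    case True
    then show ?thesis by (auto simp: inside_def)
  qed
  then show ?thesis
    using kh by (auto simp: image_iff) (metis)
qed

lemma homeomorphism_mult:
  fixes w :: "'a::real_normed_field"
  assumes "w \<noteq> 0"
  shows "homeomorphism UNIV UNIV (\<lambda>z. w * z) (\<lambda>z. z / w)"
  using assms by (intro homeomorphismI) (auto intro!: continuous_intros image_eqI)

section \<open>Unimodular linear maps of the plane preserve Lebesgue measure\<close>

lemma emeasure_lborel_translate_vimage:
  fixes B :: "real set"
  assumes "B \<in> sets borel"
  shows "emeasure lborel ((+) c -` B) = emeasure lborel B"
proof -
  have "emeasure lborel B = emeasure (distr lborel borel ((+) c)) B"
    by (simp add: lborel_distr_plus)
  also have "\<dots> = emeasure lborel ((+) c -` B)"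
    using assms by (simp add: emeasure_distr)
  finally show ?thesis ..
qed

lemma lborel_distr_shear:
  fixes f :: "real \<Rightarrow> real"
  assumes f: "f \<in> borel_measurable borel"
  shows "distr lborel borel (\<lambda>z::real \<times> real. (fst z + f (snd z), snd z)) = lborel"
proof (rule measure_eqI)
  let ?S = "\<lambda>z::real \<times> real. (fst z + f (snd z), snd z)"
  have "(\<lambda>z::real \<times> real. f (snd z)) \<in> borel_measurable borel"
    using borel_measurable_continuous_onI[OF continuous_on_snd[OF continuous_on_id]] f
    by (rule measurable_compose)
  then have S: "?S \<in> borel_measurable borel"
    using borel_measurable_continuous_onI[OF continuous_on_fst[OF continuous_on_id]]
      borel_measurable_continuous_onI[OF continuous_on_snd[OF continuous_on_id]]
    by (intro borel_measurable_Pair borel_measurable_add)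
  have sets_prod: "sets (lborel \<Otimes>\<^sub>M lborel) = sets (borel :: (real \<times> real) measure)"
    by (simp only: lborel_prod sets_lborel)
  fix A :: "(real \<times> real) set"
  assume "A \<in> sets (distr lborel borel ?S)"
  then have A: "A \<in> sets borel" by simp
  have "emeasure (distr lborel borel ?S) A = emeasure (lborel \<Otimes>\<^sub>M lborel) (?S -` A)"
    using S A by (simp add: emeasure_distr lborel_prod)
  also have "\<dots> = (\<integral>\<^sup>+y. emeasure lborel ((\<lambda>x. (x, y)) -` ?S -` A) \<partial>lborel)"
    using measurable_sets[OF S A]
    by (intro lborel_pair.emeasure_pair_measure_alt2) (simp only: sets_prod space_borel Int_UNIV_right)
  also have "\<dots> = (\<integral>\<^sup>+y. emeasure lborel ((\<lambda>x. (x, y)) -` A) \<partial>lborel)"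
  proof (rule nn_integral_cong)
    fix y
    have "(\<lambda>x. (x, y)) -` A \<in> sets borel"
      using measurable_sets[OF _ A, of "\<lambda>x. (x, y)" borel] by (simp add: measurable_Pair1')
    moreover have "(\<lambda>x. (x, y)) -` ?S -` A = (+) (f y) -` ((\<lambda>x. (x, y)) -` A)"
      by (auto simp: add.commute)
    ultimately show "emeasure lborel ((\<lambda>x. (x, y)) -` ?S -` A) = emeasure lborel ((\<lambda>x. (x, y)) -` A)"
      by (simp add: emeasure_lborel_translate_vimage)
  qed
  also have "\<dots> = emeasure (lborel \<Otimes>\<^sub>M lborel) A"
    using A by (intro lborel_pair.emeasure_pair_measure_alt2[symmetric]) (simp only: sets_prod)
  also have "\<dots> = emeasure lborel A"
    by (simp only: lborel_prod)
  finally show "emeasure (distr lborel borel ?S) A = emeasure lborel A" .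
qed simp

lemma lborel_distr_swap: "distr lborel borel (\<lambda>z::real \<times> real. (snd z, fst z)) = lborel"
proof -
  have "distr (lborel \<Otimes>\<^sub>M lborel) (lborel \<Otimes>\<^sub>M lborel) (\<lambda>(x, y). (y, x))
      = (lborel \<Otimes>\<^sub>M lborel :: (real \<times> real) measure)"
    by (rule lborel_pair.distr_pair_swap[symmetric])
  then have "distr lborel lborel (\<lambda>z::real \<times> real. (snd z, fst z)) = lborel"
    by (simp add: lborel_prod case_prod_beta')
  then show ?thesis
    by (metis distr_cong sets_lborel)
qed

lemma lborel_distr_compose:
  fixes f g :: "'a::euclidean_space \<Rightarrow> 'a"
  assumes "f \<in> borel_measurable borel" "g \<in> borel_measurable borel"
    "distr lborel borel f = lborel" "distr lborel borel g = lborel"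
  shows "distr lborel borel (g \<circ> f) = lborel"
  using distr_distr[of g borel borel f lborel] assms by simp

lemma lborel_distr_shear_snd:
  "distr lborel borel (\<lambda>z::real \<times> real. (fst z, snd z + k * fst z)) = lborel"
proof -
  let ?swap = "\<lambda>z::real \<times> real. (snd z, fst z)"
  have swap: "?swap \<in> borel_measurable borel"
    by (intro borel_measurable_continuous_onI continuous_intros)
  have shear: "(\<lambda>z::real \<times> real. (fst z + k * snd z, snd z)) \<in> borel_measurable borel"
    by (intro borel_measurable_continuous_onI continuous_intros)
  have "(\<lambda>z::real \<times> real. (fst z, snd z + k * fst z))
      = ?swap \<circ> ((\<lambda>z. (fst z + k * snd z, snd z)) \<circ> ?swap)"
    by auto
  then show ?thesis
    using swap shear lborel_distr_swap lborel_distr_shear[of "\<lambda>y. k * y"]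
    by (simp only:) (intro lborel_distr_compose measurable_comp[OF swap shear]; simp)
qed

definition linmap2 :: "real \<Rightarrow> real \<Rightarrow> real \<Rightarrow> real \<Rightarrow> real \<times> real \<Rightarrow> real \<times> real" where
  "linmap2 m11 m12 m21 m22 z = (m11 * fst z + m12 * snd z, m21 * fst z + m22 * snd z)"

lemma linear_linmap2: "linear (linmap2 m11 m12 m21 m22)"
  by (rule linearI) (auto simp: linmap2_def algebra_simps)

text \<open>A unimodular matrix with \<open>m21 \<noteq> 0\<close> factors into three shears.\<close>
lemma lborel_distr_linmap2:
  assumes "m21 \<noteq> 0" "m11 * m22 - m12 * m21 = 1"
  shows "distr lborel borel (linmap2 m11 m12 m21 m22) = lborel"
proof -
  let ?X = "\<lambda>k (z::real \<times> real). (fst z + k * snd z, snd z)"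
  let ?Y = "\<lambda>k (z::real \<times> real). (fst z, snd z + k * fst z)"
  have X: "?X k \<in> borel_measurable borel" and Y: "?Y k \<in> borel_measurable borel" for k
    by (intro borel_measurable_continuous_onI continuous_intros)+
  have m12: "m12 = (m11 * m22 - 1) / m21"
    using assms by (simp add: field_simps)
  have "linmap2 m11 m12 m21 m22 = ?X ((m11 - 1) / m21) \<circ> (?Y m21 \<circ> ?X ((m22 - 1) / m21))"
    using assms(1) unfolding m12 by (intro ext) (simp add: linmap2_def field_simps)
  moreover have "distr lborel borel (?X k) = lborel" for k
    using lborel_distr_shear[of "(*) k"] by simp
  ultimately show ?thesis
    using lborel_distr_shear_snd
    by (simp only:) (intro lborel_distr_compose X Y measurable_comp[OF X Y])
qed

section \<open>Centroid of a region invariant under an affine map\<close>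

lemma integral_id_eq_fixed_point:
  fixes K :: "'a::euclidean_space set" and L :: "'a \<Rightarrow> 'a"
  assumes K: "K \<in> sets borel" "bounded K"
    and L: "linear L" "\<And>v. L v = v \<Longrightarrow> v = 0"
    and preserving: "distr lborel borel L = lborel"
    and invariant: "\<And>z. C + L (z - C) \<in> K \<longleftrightarrow> z \<in> K"
  shows "integral K (\<lambda>z. z) = measure lebesgue K *\<^sub>R C"
proof -
  let ?\<rho> = "\<lambda>z. C + L (z - C)"
  have bl: "bounded_linear L"
    using L(1) by (simp add: linear_conv_bounded_linear)
  have L_meas: "L \<in> borel_measurable borel"
    by (rule borel_measurable_continuous_onI[OF linear_continuous_on[OF bl]])
  have \<rho>_eq: "?\<rho> = (+) (C - L C) \<circ> L"
    using L(1) by (auto simp: linear_diff)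
  have \<rho>: "?\<rho> \<in> borel_measurable borel"
    unfolding \<rho>_eq by (intro measurable_comp[OF L_meas] borel_measurable_add) auto
  have \<rho>_preserving: "distr lborel borel ?\<rho> = lborel"
    unfolding \<rho>_eq using L_meas preserving lborel_distr_plus
    by (intro lborel_distr_compose) auto
  have fin: "emeasure lborel K < \<infinity>"
    using K(2) by (rule emeasure_bounded_finite)
  have si: "set_integrable lborel K (\<lambda>z. z)"
  proof -
    have "integrable lborel (\<lambda>z. indicator (closure K) z *\<^sub>R z)"
      using K(2) by (intro borel_integrable_compact[of "closure K" "\<lambda>z. z"] continuous_on_id) simp
    then show ?thesis
      using K(1) closure_subset[of K] set_integrable_subset[of lborel "closure K" "\<lambda>z. z" K]
      by (simp add: set_integrable_def)
  qed
  then have int: "integrable lborel (\<lambda>z. indicator K z *\<^sub>R z)"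
    by (simp add: set_integrable_def)
  define I where "I = integral\<^sup>L lborel (\<lambda>z. indicator K z *\<^sub>R z)"
  define A where "A = measure lborel K"
  have "I = integral\<^sup>L (distr lborel borel ?\<rho>) (\<lambda>z. indicator K z *\<^sub>R z)"
    unfolding I_def \<rho>_preserving ..
  also have "\<dots> = integral\<^sup>L lborel (\<lambda>z. indicator K (?\<rho> z) *\<^sub>R ?\<rho> z)"
    using \<rho> int by (intro integral_distr) (simp_all add: borel_measurable_integrable)
  also have "\<dots> = integral\<^sup>L lborel (\<lambda>z. indicator K z *\<^sub>R (C - L C) + L (indicator K z *\<^sub>R z))"
    using invariant L(1)
    by (intro Bochner_Integration.integral_cong) (simp_all add: indicator_def linear_diff linear_0)
  also have "\<dots> = A *\<^sub>R (C - L C) + L I"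
  proof -
    have "integrable lborel (\<lambda>z. indicator K z *\<^sub>R (C - L C))"
      using K(1) fin by (intro integrable_scaleR_left) simp
    moreover have "integral\<^sup>L lborel (\<lambda>z. indicator K z *\<^sub>R (C - L C)) = A *\<^sub>R (C - L C)"
      using K(1) fin by (subst integral_scaleR_left) (simp_all add: A_def)
    moreover have "integrable lborel (\<lambda>z. L (indicator K z *\<^sub>R z))"
      by (rule integrable_bounded_linear[OF bl int])
    ultimately show ?thesis
      by (simp add: Bochner_Integration.integral_add integral_bounded_linear[OF bl int] I_def)
  qed
  finally have "L (I - A *\<^sub>R C) = I - A *\<^sub>R C"
    using L(1) by (simp add: linear_diff linear_scale algebra_simps)
  then have "I = A *\<^sub>R C"
    using L(2)[of "I - A *\<^sub>R C"] by simp
  then show ?thesis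
    using set_borel_integral_eq_integral(2)[OF si] K(1)
    by (simp add: I_def A_def set_lebesgue_integral_def)
qed

lemma area_centroid_eq_fixed_point:
  fixes K :: "(real \<times> real) set" and L :: "real \<times> real \<Rightarrow> real \<times> real"
  assumes K: "open K" "bounded K" "C \<in> K"
    and L: "linear L" "\<And>v. L v = v \<Longrightarrow> v = 0" "distr lborel borel L = lborel"
    and invariant: "\<And>z. C + L (z - C) \<in> K \<longleftrightarrow> z \<in> K"
  shows "area_centroid K = C"
proof -
  obtain e where e: "e > 0" "ball C e \<subseteq> K"
    using K(1,3) open_contains_ball by blast
  have "0 < measure lebesgue (ball C e)"
    using e(1) by (simp add: content_ball_pos)
  also have "\<dots> \<le> measure lebesgue K"
    using e(2) K emeasure_bounded_finite[OF K(2)] by (intro measure_mono_fmeasurable) (auto simp: fmeasurable_def)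
  finally show ?thesis
    using integral_id_eq_fixed_point[OF _ K(2) L invariant] K(1)
    by (simp add: area_centroid_def)
qed

section \<open>The deltoid\<close>

definition deltoid :: "real \<Rightarrow> real \<Rightarrow> complex" where
  "deltoid u t = cis (- t) + cis (2 * t + u) / 2"

lemma deltoid_rotate: "deltoid u (t - 2*pi/3) = cis (2*pi/3) * deltoid u t"
proof -
  have "cis (2 * (t - 2*pi/3) + u) = cis (2*pi/3 + (2 * t + u) + 2*pi*(-1))"
    by (rule arg_cong[where f = cis]) simp
  also have "\<dots> = cis (2*pi/3) * cis (2 * t + u)"
    by (simp only: cis_mult[symmetric] cis_multiple_2pi[of "-1"] Ints_minus Ints_1 mult_1_right)
  finally show ?thesis
    by (simp add: deltoid_def cis_mult algebra_simps)
qed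

lemma deltoid_shift_period:
  assumes "k \<in> \<int>"
  shows "deltoid u (t + 2*pi*k) = deltoid u t"
proof -
  have "cis (- (t + 2*pi*k)) = cis (- t) * inverse (cis (2*pi*k))"
    by (simp add: cis_mult)
  moreover have "cis (2 * (t + 2*pi*k) + u) = cis (2 * t + u) * cis (2*pi*(2*k))"
    by (simp add: cis_mult algebra_simps)
  moreover have "cis (2*pi*(2*k)) = 1"
    using assms by (intro cis_multiple_2pi) simp
  ultimately show ?thesis
    using assms by (simp add: deltoid_def)
qed

lemma deltoid_image_period: "deltoid u ` {0..2*pi} = range (deltoid u)"
proof -
  have "deltoid u t \<in> deltoid u ` {0..2*pi}" for t
  proof -
    define k :: real where "k = - of_int \<lfloor>t / (2*pi)\<rfloor>"
    have "0 \<le> t + 2*pi*k" "t + 2*pi*k \<le> 2*pi"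
      unfolding k_def using floor_divide_lower[of "2*pi" t] floor_divide_upper[of "2*pi" t]
      by (simp_all add: algebra_simps)
    moreover have "deltoid u (t + 2*pi*k) = deltoid u t"
      by (rule deltoid_shift_period) (simp add: k_def)
    ultimately show ?thesis by (metis atLeastAtMost_iff image_eqI)
  qed
  then show ?thesis by blast
qed

lemma deltoid_rotate_range: "(\<lambda>z. cis (2*pi/3) * z) ` range (deltoid u) = range (deltoid u)"
proof -
  have "deltoid u t = cis (2*pi/3) * deltoid u (t + 2*pi/3)" for t
    using deltoid_rotate[of u "t + 2*pi/3"] by simp
  then have "range (deltoid u) \<subseteq> (\<lambda>z. cis (2*pi/3) * z) ` range (deltoid u)"
    by blast
  moreover have "(\<lambda>z. cis (2*pi/3) * z) ` range (deltoid u) \<subseteq> range (deltoid u)"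
    using deltoid_rotate[symmetric] by blast
  ultimately show ?thesis by blast
qed

lemma cube_root_of_unity_sum: "1 + cis (2*pi/3) + cis (2*pi/3)^2 = 0"
proof -
  have "cis (2*pi/3) ^ 3 = cis (3 * (2*pi/3))"
    by (simp only: Complex.DeMoivre of_nat_numeral)
  also have "\<dots> = cis (2*pi)" by (rule arg_cong[where f = cis]) simp
  finally have "cis (2*pi/3) ^ 3 = 1" by simp
  moreover have "cis (2*pi/3) \<noteq> 1"
    by (simp add: complex_eq_iff sin_120)
  moreover have "cis (2*pi/3) ^ 3 - 1 = (cis (2*pi/3) - 1) * (1 + cis (2*pi/3) + cis (2*pi/3)^2)"
    by (simp add: algebra_simps power3_eq_cube power2_eq_square)
  ultimately show ?thesis by simp
qed

lemma deltoid_has_integral: "(deltoid u has_integral 0) {0..2*pi}"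
proof -
  define F where "F t = \<i> * cis (- t) - \<i> * cis (2 * t + u) / 4" for t
  have "(F has_vector_derivative deltoid u t) (at t within {0..2*pi})" for t
    unfolding F_def deltoid_def has_vector_derivative_def
    by (auto intro!: derivative_eq_intros simp: algebra_simps scaleR_conv_of_real)
  then have "(deltoid u has_integral F (2*pi) - F 0) {0..2*pi}"
    by (intro fundamental_theorem_of_calculus) auto
  moreover have "F (2*pi) = F 0"
  proof -
    have "cis (- (2*pi)) = cis (2*pi*(-1))" "cis (2 * (2*pi) + u) = cis (2*pi*2) * cis u"
      by (simp_all add: cis_mult algebra_simps)
    moreover have "cis (2*pi*(-1)) = 1" "cis (2*pi*2) = 1"
      by (simp_all only: cis_multiple_2pi Ints_minus Ints_1 Ints_numeral)
    ultimately show ?thesis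
      by (simp add: F_def)
  qed
  ultimately show ?thesis by simp
qed

lemma zero_inside_deltoid: "0 \<in> inside (range (deltoid u))"
proof -
  define \<gamma> where "\<gamma> t = deltoid u (2*pi*t)" for t
  define g where "g = reversepath (circlepath 0 1)"
  have g: "g t = cis (- (2*pi*t))" for t
  proof -
    have "g t = cis (2*pi*(1 - t))"
      by (simp add: g_def reversepath_def circlepath_def part_circlepath_def linepath_def
          cis_conv_exp algebra_simps)
    also have "\<dots> = cis (- (2*pi*t)) * cis (2*pi)"
      by (simp add: cis_mult algebra_simps)
    finally show ?thesis
      by simp
  qed
  have path_image: "path_image \<gamma> = range (deltoid u)"
    unfolding path_image_def \<gamma>_def image_image[of "deltoid u" "\<lambda>t. 2*pi*t", symmetric]
    by (simp add: deltoid_image_period)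
  have loop: "path \<gamma>" "pathfinish \<gamma> = pathstart \<gamma>"
    using deltoid_shift_period[of 1 u 0]
    by (auto simp: \<gamma>_def path_def pathfinish_def pathstart_def deltoid_def intro!: continuous_intros)
  have near: "norm (\<gamma> t - g t) < norm (g t - 0)" for t
    by (simp add: \<gamma>_def deltoid_def g norm_divide)
  have "winding_number \<gamma> 0 = winding_number g 0"
    using loop near by (intro winding_number_nearby_loops_eq) (auto simp: g_def)
  also have "\<dots> = - 1"
    using winding_number_reversepath[of "circlepath 0 1" 0] winding_number_circlepath_centre[of 1 0]
    by (simp add: g_def path_image_circlepath)
  finally have "0 \<notin> outside (path_image \<gamma>)"
    using winding_number_zero_in_outside[OF loop] by fastforce
  moreover have "0 \<notin> path_image \<gamma>"
  proof
    assume "0 \<in> path_image \<gamma>"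
    then obtain t where "\<gamma> t = 0"
      by (auto simp: path_image_def)
    with near[of t] show False
      by simp
  qed
  ultimately have "0 \<in> inside (path_image \<gamma>)"
    using inside_Un_outside[of "path_image \<gamma>"] by blast
  then show ?thesis
    by (simp only: path_image)
qed

lemma compact_range_deltoid: "compact (range (deltoid u))"
  unfolding deltoid_image_period[symmetric] deltoid_def
  by (intro compact_continuous_image continuous_intros) auto

definition stretch :: "real \<times> real \<Rightarrow> real \<Rightarrow> real \<Rightarrow> complex \<Rightarrow> real \<times> real" where
  "stretch C \<alpha> \<beta> z = C + (\<alpha> * Re z, \<beta> * Im z)"

lemma linear_stretch: "linear (stretch 0 \<alpha> \<beta>)"
  by (rule linearI) (simp_all add: stretch_def algebra_simps)

lemma stretch_eq: "stretch C \<alpha> \<beta> z = C + stretch 0 \<alpha> \<beta> z"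
  by (simp add: stretch_def)

lemma triangle_centroid_stretch:
  "triangle_centroid (stretch C \<alpha> \<beta> z1) (stretch C \<alpha> \<beta> z2) (stretch C \<alpha> \<beta> z3)
     = stretch C \<alpha> \<beta> ((z1 + z2 + z3) / 3)"
  by (cases C) (simp add: triangle_centroid_def stretch_def algebra_simps)

lemma has_integral_stretch:
  assumes "(f has_integral I) {a..b}" "a \<le> b"
  shows "((\<lambda>t. stretch C \<alpha> \<beta> (f t)) has_integral ((b - a) *\<^sub>R C + stretch 0 \<alpha> \<beta> I)) {a..b}"
proof -
  have "((\<lambda>t. stretch 0 \<alpha> \<beta> (f t)) has_integral stretch 0 \<alpha> \<beta> I) {a..b}"
    using has_integral_linear[OF assms(1) linear_stretch[THEN linear_conv_bounded_linear[THEN iffD1]]]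
    by (simp add: o_def)
  then show ?thesis
    unfolding stretch_eq[of C] using assms(2) has_integral_const_real[of C a b]
    by (intro has_integral_add) auto
qed

lemma homeomorphism_stretch:
  assumes "\<alpha> \<noteq> 0" "\<beta> \<noteq> 0"
  shows "homeomorphism UNIV UNIV (stretch C \<alpha> \<beta>)
           (\<lambda>w. of_real ((fst w - fst C) / \<alpha>) + \<i> * of_real ((snd w - snd C) / \<beta>))"
  using assms
  by (intro homeomorphismI) (auto simp: stretch_def complex_eq_iff prod_eq_iff intro!: continuous_intros)

text \<open>The matrix of D R D^-1, where D = diag(alpha, beta) and R is the rotation by 2pi/3.\<close>
definition rotation_120 :: "real \<Rightarrow> real \<Rightarrow> real \<times> real \<Rightarrow> real \<times> real" where
  "rotation_120 \<alpha> \<beta> = linmap2 (-1/2) (- sqrt 3 / 2 * \<alpha> / \<beta>) (sqrt 3 / 2 * \<beta> / \<alpha>) (-1/2)"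

lemma stretch_mult_cis_120:
  assumes "\<alpha> \<noteq> 0" "\<beta> \<noteq> 0"
  shows "stretch C \<alpha> \<beta> (cis (2*pi/3) * z) = C + rotation_120 \<alpha> \<beta> (stretch C \<alpha> \<beta> z - C)"
  using assms by (simp add: stretch_def rotation_120_def linmap2_def cos_120' sin_120' field_simps)

lemma rotation_120_fixed_point:
  assumes "\<alpha> \<noteq> 0" "\<beta> \<noteq> 0" "rotation_120 \<alpha> \<beta> v = v"
  shows "v = 0"
proof -
  define z where "z = Complex (fst v / \<alpha>) (snd v / \<beta>)"
  have v: "v = stretch 0 \<alpha> \<beta> z"
    using assms(1,2) by (simp add: z_def stretch_def)
  have "stretch 0 \<alpha> \<beta> (cis (2*pi/3) * z) = stretch 0 \<alpha> \<beta> z"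
    using stretch_mult_cis_120[OF assms(1,2), of 0 z] assms(3) by (simp add: v[symmetric])
  then have "cis (2*pi/3) * z = z"
    using assms(1,2) arg_cong[where f = "\<lambda>w. Complex (fst w / \<alpha>) (snd w / \<beta>)"]
    by (simp add: stretch_def complex_eq_iff)
  then have "(cis (2*pi/3) - 1) * z = 0"
    by (simp add: algebra_simps)
  moreover have "cis (2*pi/3) \<noteq> 1"
    by (simp add: complex_eq_iff sin_120)
  ultimately show ?thesis
    by (simp add: v stretch_def zero_prod_def)
qed

lemma lborel_distr_rotation_120:
  assumes "\<alpha> \<noteq> 0" "\<beta> \<noteq> 0"
  shows "distr lborel borel (rotation_120 \<alpha> \<beta>) = lborel"
proof -
  have "sqrt 3 * sqrt 3 = (3::real)" by simp
  then show ?thesis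
    unfolding rotation_120_def using assms by (intro lborel_distr_linmap2) (auto simp: field_simps)
qed

lemma area_centroid_inside_stretch:
  assumes "\<alpha> \<noteq> 0" "\<beta> \<noteq> 0" "compact S" "0 \<in> inside S"
    and symmetric: "(\<lambda>z. cis (2*pi/3) * z) ` S = S"
  shows "area_centroid (inside (stretch C \<alpha> \<beta> ` S)) = C"
proof (rule area_centroid_eq_fixed_point)
  let ?s = "stretch C \<alpha> \<beta>" and ?\<omega> = "cis (2*pi/3)"
  obtain s' where s: "homeomorphism UNIV UNIV ?s s'"
    using homeomorphism_stretch[OF assms(1,2)] by blast
  have K: "inside (?s ` S) = ?s ` inside S"
    by (rule inside_homeomorphism_image[OF s])
  have "compact (?s ` S)"
    using s assms(3) continuous_on_subset[of UNIV ?s S]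
    by (intro compact_continuous_image) (auto simp: homeomorphism_def)
  then show "open (inside (?s ` S))" "bounded (inside (?s ` S))"
    by (simp_all add: open_inside bounded_inside compact_imp_closed compact_imp_bounded)
  show "C \<in> inside (?s ` S)"
    using assms(4) unfolding K by (rule rev_image_eqI) (simp add: stretch_def zero_prod_def)
  show "linear (rotation_120 \<alpha> \<beta>)"
    by (simp add: rotation_120_def linear_linmap2)
  show "rotation_120 \<alpha> \<beta> v = v \<Longrightarrow> v = 0" for v
    using rotation_120_fixed_point[OF assms(1,2)] .
  show "distr lborel borel (rotation_120 \<alpha> \<beta>) = lborel"
    using lborel_distr_rotation_120[OF assms(1,2)] .
  have "?\<omega> \<noteq> 0" by simp
  then have rot: "(\<lambda>z. ?\<omega> * z) ` inside S = inside S"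
    using inside_homeomorphism_image[OF homeomorphism_mult, of ?\<omega> S] symmetric by simp
  have inj: "inj ?s" "inj (\<lambda>z. ?\<omega> * z)"
    by (rule inj_on_inverseI[of _ s'], simp add: homeomorphism_apply1[OF s]) (simp add: inj_on_def)
  show "C + rotation_120 \<alpha> \<beta> (w - C) \<in> inside (?s ` S) \<longleftrightarrow> w \<in> inside (?s ` S)" for w
  proof -
    define z where "z = s' w"
    have z: "w = ?s z"
      by (simp add: z_def homeomorphism_apply2[OF s])
    have "C + rotation_120 \<alpha> \<beta> (w - C) = ?s (?\<omega> * z)"
      unfolding z stretch_mult_cis_120[OF assms(1,2)] ..
    then show ?thesis
      unfolding K z using rot inj by (metis image_eqI inj_image_mem_iff)
  qed
qed

section \<open>The negative pedal curve\<close>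

definition neg_pedal_centroid :: "real \<Rightarrow> real \<Rightarrow> real \<Rightarrow> real \<times> real" where
  "neg_pedal_centroid a b u = (- (a^2 + b^2) / (2*a) * cos u, - (a^2 + b^2) / (2*b) * sin u)"

lemma neg_pedal_eq_stretch_deltoid:
  assumes "a > 0" "b > 0" "c^2 = a^2 - b^2"
  shows "neg_pedal a b c u t = stretch (neg_pedal_centroid a b u) (c^2/a) (c^2/b) (deltoid u t)"
proof -
  define v where "v = t + u"
  have u: "u = v - t" and w: "2*t + u = t + v" using v_def by auto
  have e1: "cos (2*t + u) = cos t * cos v - sin t * sin v" unfolding w by (simp add: cos_add)
  have e2: "cos u = cos v * cos t + sin v * sin t" unfolding u by (simp add: cos_diff)
  have e3: "sin (2*t + u) = sin t * cos v + cos t * sin v" unfolding w by (simp add: sin_add)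
  have e4: "sin u = sin v * cos t - cos v * sin t" unfolding u by (simp add: sin_diff)
  have "deltoid u t = Complex (cos t + cos (2*t + u) / 2) (- sin t + sin (2*t + u) / 2)"
    by (simp add: deltoid_def complex_eq_iff)
  moreover have "a^2 = b^2 + c^2" using assms(3) by simp
  ultimately show ?thesis using assms(1,2)
    unfolding neg_pedal_def stretch_def neg_pedal_centroid_def e1 e3 v_def[symmetric]
    by (simp add: e2 e4 field_simps)
qed

lemma neg_pedal_image:
  assumes "a > 0" "b > 0" "c^2 = a^2 - b^2"
  shows "neg_pedal a b c u ` {0..2*pi} = stretch (neg_pedal_centroid a b u) (c^2/a) (c^2/b) ` range (deltoid u)"
  using neg_pedal_eq_stretch_deltoid[OF assms]
  by (simp add: deltoid_image_period[symmetric] image_image)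

lemma area_centroid_neg_pedal:
  assumes "a > 0" "b > 0" "c \<noteq> 0" "c^2 = a^2 - b^2"
  shows "area_centroid (inside (neg_pedal a b c u ` {0..2*pi})) = neg_pedal_centroid a b u"
  unfolding neg_pedal_image[OF assms(1,2,4)] using assms(1-3)
  by (intro area_centroid_inside_stretch compact_range_deltoid zero_inside_deltoid deltoid_rotate_range)
    simp_all

lemma mean_neg_pedal:
  assumes "a > 0" "b > 0" "c^2 = a^2 - b^2"
  shows "(1 / (2*pi)) *\<^sub>R integral {0..2*pi} (neg_pedal a b c u) = neg_pedal_centroid a b u"
proof -
  have "neg_pedal a b c u = (\<lambda>t. stretch (neg_pedal_centroid a b u) (c^2/a) (c^2/b) (deltoid u t))"
    using neg_pedal_eq_stretch_deltoid[OF assms] by blast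
  moreover have "stretch 0 (c^2/a) (c^2/b) 0 = 0"
    by (simp add: stretch_def zero_prod_def)
  ultimately have "(neg_pedal a b c u has_integral (2*pi) *\<^sub>R neg_pedal_centroid a b u) {0..2*pi}"
    using has_integral_stretch[OF deltoid_has_integral[of u], where C = "neg_pedal_centroid a b u"
        and \<alpha> = "c^2/a" and \<beta> = "c^2/b"]
    by simp
  then show ?thesis
    by (simp add: integral_unique)
qed

lemma cusp_triangle_centroid_neg_pedal:
  assumes "a > 0" "b > 0" "c^2 = a^2 - b^2" "t2 = t1 - 2*pi/3" "t3 = t2 - 2*pi/3"
  shows "triangle_centroid (neg_pedal a b c u t1) (neg_pedal a b c u t2) (neg_pedal a b c u t3)
           = neg_pedal_centroid a b u"
proof -
  have "deltoid u t2 = cis (2*pi/3) * deltoid u t1" "deltoid u t3 = cis (2*pi/3) * deltoid u t2"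
    by (simp_all only: assms(4,5) deltoid_rotate)
  then have "deltoid u t1 + deltoid u t2 + deltoid u t3 = (1 + cis (2*pi/3) + cis (2*pi/3)^2) * deltoid u t1"
    by (simp add: power2_eq_square algebra_simps)
  then have "deltoid u t1 + deltoid u t2 + deltoid u t3 = 0"
    by (simp add: cube_root_of_unity_sum)
  then show ?thesis
    unfolding neg_pedal_eq_stretch_deltoid[OF assms(1-3)] triangle_centroid_stretch
    by (simp add: stretch_def zero_prod_def)
qed

theorem proposition3p2:
  fixes a b c u :: real
  assumes "a > b" and "b > 0" and "c > 0" and "c^2 = a^2 - b^2"
  defines "C2 \<equiv> (- (a^2 + b^2) / (2*a) * cos u, - (a^2 + b^2) / (2*b) * sin u)"
  defines "tt \<equiv> (\<lambda>i::nat. - u / 3 - 2 * pi * (real i - 1) / 3)"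
  shows "area_centroid (inside (neg_pedal a b c u ` {0..2*pi})) = C2
         \<and> (1 / (2*pi)) *\<^sub>R integral {0..2*pi} (neg_pedal a b c u) = C2
         \<and> triangle_centroid (neg_pedal a b c u (tt 1)) (neg_pedal a b c u (tt 2))
                             (neg_pedal a b c u (tt 3)) = C2"
proof -
  have a: "a > 0" using assms(1,2) by linarith
  have C2: "C2 = neg_pedal_centroid a b u"
    by (simp add: C2_def neg_pedal_centroid_def)
  have "tt 2 = tt 1 - 2*pi/3" "tt 3 = tt 2 - 2*pi/3"
    by (simp_all add: tt_def field_simps)
  then show ?thesis
    unfolding C2 using a assms(2-4)
    by (simp add: area_centroid_neg_pedal mean_neg_pedal cusp_triangle_centroid_neg_pedal)
qed

end
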